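(* Let $\mathcal{M}$ be a gridding matrix whose cell graph $G_\mathcal{M}$ is a tree containing no bumper-ended path. Then $G_\mathcal{M}$ contains a vertex $r$ such that for every vertex $q\ne r$, the path in $G_\mathcal{M}$ from $r$ to $q$, written $r=p_1,\dots,p_m=q$, does not end in a bumper, i.e., $(p_{m-1},q)$ is not a bumper.
   Context: A $k\times\ell$ gridding matrix $\mathcal{M}$ has permutation classes as entries ($i$ columns left to right, $j$ rows bottom to top). The cell graph $G_\mathcal{M}$ has as vertices the cells with infinite entries, adjacent when they share a row or column and all cells strictly between them are finite or empty; $\mathcal{M}_p$ denotes the entry at vertex $p$. For a permutation $\pi$ of length $n$ (diagram $\{(i,\pi_i)\}$), intervalicity of $A\subseteq[n]$ is the least number of disjoint integer intervals with union $A$, and grid-complexity of a point set is the maximum of the intervalicities of its two axis projections. The horizontal path-width of $\pi$ is the maximum over $i$ of the grid-complexity of $\{(1,\pi_1),\dots,(i,\pi_i)\}$; the vertical path-width is the maximum over $i$ of the grid-complexity of the set of points with values $1,\dots,i$. An ordered pair $(p,q)$ of vertices of $G_\mathcal{M}$ is a bumper if either $\mathcal{M}_q$ has unbounded horizontal path-width (over its members) and shares a column with $p$, or $\mathcal{M}_q$ has unbounded vertical path-width and shares a row with $p$. A bumper-ended path is a path $p_1,\dots,p_k$ in $G_\mathcal{M}$ with both $(p_2,p_1)$ and $(p_{k-1},p_k)$ bumpers. *)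

theory Defs
  imports Main
begin

text \<open>A permutation of length n is a list that is an arrangement of 1..n;
  its i-th entry (1-indexed) is pi_i = pi ! (i-1).\<close>
definition is_perm :: "nat list \<Rightarrow> bool" where
  "is_perm \<pi> \<longleftrightarrow> distinct \<pi> \<and> set \<pi> = {1..length \<pi>}"

definition contains :: "nat list \<Rightarrow> nat list \<Rightarrow> bool" where
  "contains \<pi> \<sigma> \<longleftrightarrow> (\<exists>is. length is = length \<sigma> \<and> sorted_wrt (<) is \<and>
      (\<forall>a<length is. is ! a < length \<pi>) \<and>
      (\<forall>a<length \<sigma>. \<forall>b<length \<sigma>. (\<sigma> ! a < \<sigma> ! b \<longleftrightarrow> \<pi> ! (is ! a) < \<pi> ! (is ! b))))"

definition perm_class :: "nat list set \<Rightarrow> bool" where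
  "perm_class C \<longleftrightarrow> (\<forall>\<pi>\<in>C. is_perm \<pi> \<and> (\<forall>\<sigma>. is_perm \<sigma> \<and> contains \<pi> \<sigma> \<longrightarrow> \<sigma> \<in> C))"

definition intervalicity :: "nat set \<Rightarrow> nat" where
  "intervalicity A = (LEAST k. \<exists>f :: nat \<Rightarrow> nat \<times> nat.
      (\<forall>a<k. fst (f a) \<le> snd (f a)) \<and>
      (\<forall>a<k. \<forall>b<k. a \<noteq> b \<longrightarrow> {fst (f a)..snd (f a)} \<inter> {fst (f b)..snd (f b)} = {}) \<and>
      A = (\<Union>a<k. {fst (f a)..snd (f a)}))"

definition grid_complexity :: "(nat \<times> nat) set \<Rightarrow> nat" where
  "grid_complexity P = max (intervalicity (fst ` P)) (intervalicity (snd ` P))"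

definition hprefix :: "nat list \<Rightarrow> nat \<Rightarrow> (nat \<times> nat) set" where
  "hprefix \<pi> i = {(Suc a, \<pi> ! a) | a. a < i \<and> a < length \<pi>}"

definition vprefix :: "nat list \<Rightarrow> nat \<Rightarrow> (nat \<times> nat) set" where
  "vprefix \<pi> i = {(Suc a, \<pi> ! a) | a. a < length \<pi> \<and> \<pi> ! a \<le> i}"

definition hpw :: "nat list \<Rightarrow> nat" where
  "hpw \<pi> = Max ({0} \<union> {grid_complexity (hprefix \<pi> i) | i. 1 \<le> i \<and> i \<le> length \<pi>})"

definition vpw :: "nat list \<Rightarrow> nat" where
  "vpw \<pi> = Max ({0} \<union> {grid_complexity (vprefix \<pi> i) | i. 1 \<le> i \<and> i \<le> length \<pi>})"

definition unbounded_hpw :: "nat list set \<Rightarrow> bool" where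
  "unbounded_hpw C \<longleftrightarrow> \<not> (\<exists>B. \<forall>\<pi>\<in>C. hpw \<pi> \<le> B)"

definition unbounded_vpw :: "nat list set \<Rightarrow> bool" where
  "unbounded_vpw C \<longleftrightarrow> \<not> (\<exists>B. \<forall>\<pi>\<in>C. vpw \<pi> \<le> B)"

text \<open>A k x l gridding matrix is M with entries M i j for columns i < k (left to right)
  and rows j < l (bottom to top), each a permutation class. Cells are pairs (i,j).\<close>
definition gridding_matrix :: "nat \<Rightarrow> nat \<Rightarrow> (nat \<Rightarrow> nat \<Rightarrow> nat list set) \<Rightarrow> bool" where
  "gridding_matrix k l M \<longleftrightarrow> (\<forall>i<k. \<forall>j<l. perm_class (M i j))"

definition cg_V :: "nat \<Rightarrow> nat \<Rightarrow> (nat \<Rightarrow> nat \<Rightarrow> nat list set) \<Rightarrow> (nat \<times> nat) set" where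
  "cg_V k l M = {(i, j). i < k \<and> j < l \<and> infinite (M i j)}"

definition cg_E :: "nat \<Rightarrow> nat \<Rightarrow> (nat \<Rightarrow> nat \<Rightarrow> nat list set) \<Rightarrow> nat \<times> nat \<Rightarrow> nat \<times> nat \<Rightarrow> bool" where
  "cg_E k l M p q \<longleftrightarrow> p \<in> cg_V k l M \<and> q \<in> cg_V k l M \<and> p \<noteq> q \<and>
     ((fst p = fst q \<and> (\<forall>j. min (snd p) (snd q) < j \<and> j < max (snd p) (snd q) \<longrightarrow> finite (M (fst p) j))) \<or>
      (snd p = snd q \<and> (\<forall>i. min (fst p) (fst q) < i \<and> i < max (fst p) (fst q) \<longrightarrow> finite (M i (snd p)))))"

definition is_path :: "'a set \<Rightarrow> ('a \<Rightarrow> 'a \<Rightarrow> bool) \<Rightarrow> 'a list \<Rightarrow> bool" where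
  "is_path V E ps \<longleftrightarrow> ps \<noteq> [] \<and> set ps \<subseteq> V \<and> distinct ps \<and>
     (\<forall>a. Suc a < length ps \<longrightarrow> E (ps ! a) (ps ! Suc a))"

definition is_cycle :: "'a set \<Rightarrow> ('a \<Rightarrow> 'a \<Rightarrow> bool) \<Rightarrow> 'a list \<Rightarrow> bool" where
  "is_cycle V E cs \<longleftrightarrow> length cs \<ge> 3 \<and> is_path V E cs \<and> E (last cs) (hd cs)"

definition is_tree :: "'a set \<Rightarrow> ('a \<Rightarrow> 'a \<Rightarrow> bool) \<Rightarrow> bool" where
  "is_tree V E \<longleftrightarrow> V \<noteq> {} \<and>
     (\<forall>u\<in>V. \<forall>v\<in>V. \<exists>ps. is_path V E ps \<and> hd ps = u \<and> last ps = v) \<and>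
     \<not> (\<exists>cs. is_cycle V E cs)"

definition bumper :: "nat \<Rightarrow> nat \<Rightarrow> (nat \<Rightarrow> nat \<Rightarrow> nat list set) \<Rightarrow> nat \<times> nat \<Rightarrow> nat \<times> nat \<Rightarrow> bool" where
  "bumper k l M p q \<longleftrightarrow> p \<in> cg_V k l M \<and> q \<in> cg_V k l M \<and>
     ((unbounded_hpw (M (fst q) (snd q)) \<and> fst p = fst q) \<or>
      (unbounded_vpw (M (fst q) (snd q)) \<and> snd p = snd q))"

definition bumper_ended_path :: "nat \<Rightarrow> nat \<Rightarrow> (nat \<Rightarrow> nat \<Rightarrow> nat list set) \<Rightarrow> (nat \<times> nat) list \<Rightarrow> bool" where
  "bumper_ended_path k l M ps \<longleftrightarrow> is_path (cg_V k l M) (cg_E k l M) ps \<and> length ps \<ge> 2 \<and>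
     bumper k l M (ps ! 1) (ps ! 0) \<and>
     bumper k l M (ps ! (length ps - 2)) (ps ! (length ps - 1))"

end

theory Submission
  imports Defs
begin

text \<open>Call q \<^emph>\<open>bad\<close> for r if q \<noteq> r and the tree path from r to q ends in a bumper.
  Badness is transitive: if r ... p q and q q_1 ... q' both end in bumpers, then q_1 \<noteq> p
  (otherwise q q_1 ... q' would be bumper-ended), so by uniqueness of tree paths the two paths
  meet only in q, and their concatenation is the path from r to q', ending in the same bumper as
  the second one. Being also irreflexive, badness has a maximal element on the finite vertex set,
  and that vertex has no bad vertices at all.\<close>

lemma is_path_iff_successively:
  "is_path V E ps \<longleftrightarrow> ps \<noteq> [] \<and> set ps \<subseteq> V \<and> distinct ps \<and> successively E ps"
  unfolding is_path_def successively_conv_nth by blast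

lemma is_path_rev:
  assumes "symp E" and "is_path V E ps"
  shows "is_path V E (rev ps)"
proof -
  have "successively (\<lambda>x y. E y x) ps"
    using assms by (auto simp: is_path_iff_successively intro: successively_mono sympD)
  then show ?thesis
    using assms(2) by (simp add: is_path_iff_successively)
qed

lemma is_path_appendD:
  assumes "is_path V E (xs @ ys)"
  shows "xs \<noteq> [] \<Longrightarrow> is_path V E xs" and "ys \<noteq> [] \<Longrightarrow> is_path V E ys"
  using assms by (auto simp: is_path_iff_successively successively_append_iff)

lemma is_path_append_splitD:
  assumes "is_path V E (xs @ v # ys)"
  shows "is_path V E (xs @ [v])" and "is_path V E (v # ys)"
  using is_path_appendD[of V E "xs @ [v]" ys] is_path_appendD(2)[of V E xs "v # ys"] assms by auto

lemma is_path_join: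
  assumes "is_path V E (xs @ [v])" and "is_path V E (v # ys)" and "set xs \<inter> set ys = {}"
  shows "is_path V E (xs @ v # ys)"
  using assms by (auto simp: is_path_iff_successively successively_append_iff)

lemma is_path_hd_eq_last:
  assumes "is_path V E ps" and "hd ps = last ps"
  shows "ps = [hd ps]"
  using assms by (cases ps) (auto simp: is_path_def split: if_splits)

lemma is_path_hd_neq_last_cases:
  assumes "is_path V E ps" and "hd ps \<noteq> last ps"
  obtains xs where "ps = hd ps # xs @ [last ps]"
proof (cases ps)
  case (Cons x xs)
  then have "xs \<noteq> []"
    using assms(2) by auto
  then show ?thesis
    using Cons that[of "butlast xs"] by simp
qed (use assms in \<open>simp add: is_path_def\<close>)

lemma two_paths_cycle:
  assumes "symp E"
    and xs: "is_path V E (u # xs @ [w])" and ys: "is_path V E (u # ys @ [w])"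
    and disj: "set xs \<inter> set ys = {}" and neq: "xs \<noteq> ys"
  shows "is_cycle V E (u # xs @ w # rev ys)"
proof -
  have "is_path V E (ys @ [w])"
    using is_path_appendD(2)[of V E "[u]" "ys @ [w]"] ys by simp
  then have to_u: "is_path V E (w # rev ys)"
    using is_path_rev[OF assms(1)] by fastforce
  have "u \<notin> set ys"
    using ys by (simp add: is_path_def)
  then have path: "is_path V E (u # xs @ w # rev ys)"
    using is_path_join[of V E "u # xs" w "rev ys"] xs to_u disj by auto
  have "E u (hd (ys @ [w]))"
    using ys by (cases ys) (auto simp: is_path_iff_successively)
  moreover have "last (u # xs @ w # rev ys) = hd (ys @ [w])"
    by (cases ys) auto
  ultimately have "E (last (u # xs @ w # rev ys)) u"
    using \<open>symp E\<close> by (auto dest: sympD)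
  moreover have "length (u # xs @ w # rev ys) \<ge> 3"
    using neq by (cases xs; cases ys) auto
  ultimately show ?thesis
    using path by (simp add: is_cycle_def)
qed

lemma acyclic_path_unique:
  assumes "symp E" and acyclic: "\<nexists>cs. is_cycle V E cs"
  shows "is_path V E xs \<Longrightarrow> is_path V E ys \<Longrightarrow> hd xs = hd ys \<Longrightarrow> last xs = last ys \<Longrightarrow> xs = ys"
proof (induction "length xs + length ys" arbitrary: xs ys rule: less_induct)
  case less
  show ?case
  proof (cases "hd xs = last xs")
    case True
    then have "xs = [hd xs]" and "ys = [hd ys]"
      using is_path_hd_eq_last less.prems by metis+
    then show ?thesis
      using less.prems(3) by metis
  next
    case False
    define u v where "u = hd xs" and "v = last xs"
    obtain a where xs: "xs = u # a @ [v]"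
      using is_path_hd_neq_last_cases[OF less.prems(1) False] unfolding u_def v_def .
    obtain b where ys: "ys = u # b @ [v]"
      using is_path_hd_neq_last_cases[OF less.prems(2)] False less.prems(3,4)
      unfolding u_def v_def by metis
    have path_a: "is_path V E (u # a @ [v])" and path_b: "is_path V E (u # b @ [v])"
      using less.prems(1,2) xs ys by simp_all
    have len: "length xs + length ys = length a + length b + 4"
      using xs ys by simp
    show ?thesis
    proof (cases "set a \<inter> set b = {}")
      case True
      have "a = b"
        using two_paths_cycle[OF assms(1) path_a path_b True] acyclic by blast
      then show ?thesis
        using xs ys by simp
    next
      case False
      then obtain w where "w \<in> set a" "w \<in> set b" by blast
      then obtain a1 a2 b1 b2 where a: "a = a1 @ w # a2" and b: "b = b1 @ w # b2"
        by (metis split_list)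
      have "is_path V E ((u # a1) @ w # (a2 @ [v]))" "is_path V E ((u # b1) @ w # (b2 @ [v]))"
        using path_a path_b a b by simp_all
      note halves = this[THEN is_path_append_splitD(1)] this[THEN is_path_append_splitD(2)]
      have "(u # a1) @ [w] = (u # b1) @ [w]"
        by (rule less.hyps[OF _ halves(1,2)]) (use len a b in simp_all)
      moreover have "w # a2 @ [v] = w # b2 @ [v]"
        by (rule less.hyps[OF _ halves(3,4)]) (use len a b in simp_all)
      ultimately show ?thesis
        using xs ys a b by simp
    qed
  qed
qed

lemma acyclic_paths_disjoint:
  assumes "symp E" and acyclic: "\<nexists>cs. is_cycle V E cs"
    and xs: "is_path V E (xs @ [q])" and ys: "is_path V E (q # ys)"
    and "xs \<noteq> []" and "ys \<noteq> []" and turn: "last xs \<noteq> hd ys"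
  shows "set xs \<inter> set ys = {}"
proof (rule ccontr)
  assume "set xs \<inter> set ys \<noteq> {}"
  then obtain y where "y \<in> set xs" "y \<in> set ys" by blast
  then obtain x1 x2 y1 y2 where x12: "xs = x1 @ y # x2" and y12: "ys = y1 @ y # y2"
    by (metis split_list)
  have "is_path V E (x1 @ y # x2 @ [q])" and "is_path V E ((q # y1) @ y # y2)"
    using xs ys x12 y12 by simp_all
  then have to_q: "is_path V E (y # x2 @ [q])" and "is_path V E ((q # y1) @ [y])"
    using is_path_append_splitD(2)[of V E x1 y "x2 @ [q]"]
      is_path_append_splitD(1)[of V E "q # y1" y y2] by simp_all
  then have from_q_rev: "is_path V E (y # rev y1 @ [q])"
    using is_path_rev[OF assms(1)] by fastforce
  have "y # x2 @ [q] = y # rev y1 @ [q]"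
    by (rule acyclic_path_unique[OF assms(1) acyclic to_q from_q_rev]) simp_all
  then have "last (y # x2) = last (y # rev y1)" by simp
  moreover have "last (y # x2) = last xs"
    using x12 by simp
  moreover have "last (y # rev y1) = hd ys"
    using y12 by (cases y1) auto
  ultimately show False
    using turn by simp
qed

definition bumper_ended :: "'a set \<Rightarrow> ('a \<Rightarrow> 'a \<Rightarrow> bool) \<Rightarrow> ('a \<Rightarrow> 'a \<Rightarrow> bool) \<Rightarrow> 'a list \<Rightarrow> bool" where
  "bumper_ended V E B ps \<longleftrightarrow> is_path V E ps \<and> length ps \<ge> 2 \<and>
     B (ps ! 1) (ps ! 0) \<and> B (ps ! (length ps - 2)) (ps ! (length ps - 1))"

definition ends_in_bumper :: "'a set \<Rightarrow> ('a \<Rightarrow> 'a \<Rightarrow> bool) \<Rightarrow> ('a \<Rightarrow> 'a \<Rightarrow> bool) \<Rightarrow> 'a \<Rightarrow> 'a \<Rightarrow> bool" where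
  "ends_in_bumper V E B r q \<longleftrightarrow> q \<noteq> r \<and>
     (\<exists>ps. is_path V E ps \<and> hd ps = r \<and> last ps = q \<and> B (ps ! (length ps - 2)) q)"

lemma ends_in_bumper_trans:
  assumes "symp E" and acyclic: "\<nexists>cs. is_cycle V E cs" and no_ended: "\<nexists>ps. bumper_ended V E B ps"
    and "ends_in_bumper V E B r q" and "ends_in_bumper V E B q q'"
  shows "ends_in_bumper V E B r q'"
proof -
  obtain rs where rs: "is_path V E rs" "hd rs = r" "last rs = q" "q \<noteq> r"
    and Bpq: "B (rs ! (length rs - 2)) q"
    using assms(4) by (auto simp: ends_in_bumper_def)
  obtain qs where qs: "is_path V E qs" "hd qs = q" "last qs = q'" "q' \<noteq> q"
    and Bq': "B (qs ! (length qs - 2)) q'"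
    using assms(5) by (auto simp: ends_in_bumper_def)
  obtain a where a: "rs = r # a @ [q]"
    using is_path_hd_neq_last_cases[OF rs(1)] rs(2-4) by metis
  obtain c where c: "qs = q # c @ [q']"
    using is_path_hd_neq_last_cases[OF qs(1)] qs(2-4) by metis
  define p where "p = last (r # a)"
  have "rs = butlast (r # a) @ [p, q]"
    using a by (simp add: p_def)
  then have "B p q"
    using Bpq by (simp add: nth_append)
  have no_backtrack: "hd (c @ [q']) \<noteq> p"
  proof
    assume "hd (c @ [q']) = p"
    then have "qs ! 1 = p"
      using c by (cases c) auto
    then have "bumper_ended V E B qs"
      using qs(1) \<open>B p q\<close> Bq' c by (simp add: bumper_ended_def last_conv_nth[symmetric])
    then show False
      using no_ended by blast
  qed
  have disj: "set (r # a) \<inter> set (c @ [q']) = {}"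
    using acyclic_paths_disjoint[OF assms(1) acyclic, of "r # a" q "c @ [q']"] rs(1) qs(1) a c
      no_backtrack by (simp add: p_def)
  have path: "is_path V E ((r # a) @ q # c @ [q'])"
    by (rule is_path_join) (use rs(1) qs(1) a c disj in simp_all)
  have "q' \<noteq> r"
    using disj by auto
  moreover have "B (((r # a) @ q # c @ [q']) ! (length ((r # a) @ q # c @ [q']) - 2)) q'"
    using Bq' c by (simp add: nth_append)
  ultimately show ?thesis
    using path unfolding ends_in_bumper_def by fastforce
qed

lemma cg_E_symp: "symp (cg_E k l M)"
  unfolding cg_E_def by (rule sympI) (auto simp: min.commute max.commute)

lemma finite_cg_V: "finite (cg_V k l M)"
  by (rule finite_subset[of _ "{..<k} \<times> {..<l}"]) (auto simp: cg_V_def)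

theorem mainTheorem14:
  fixes k l :: nat and M :: "nat \<Rightarrow> nat \<Rightarrow> nat list set"
  assumes "gridding_matrix k l M"
    and "is_tree (cg_V k l M) (cg_E k l M)"
    and "\<not> (\<exists>ps. bumper_ended_path k l M ps)"
  shows "\<exists>r\<in>cg_V k l M. \<forall>q\<in>cg_V k l M. q \<noteq> r \<longrightarrow>
           (\<forall>ps. is_path (cg_V k l M) (cg_E k l M) ps \<and> hd ps = r \<and> last ps = q \<longrightarrow>
              \<not> bumper k l M (ps ! (length ps - 2)) q)"
proof -
  let ?V = "cg_V k l M" and ?E = "cg_E k l M"
  let ?bad = "ends_in_bumper ?V ?E (bumper k l M)"
  have acyclic: "\<nexists>cs. is_cycle ?V ?E cs" and nonempty: "?V \<noteq> {}"
    using assms(2) by (simp_all add: is_tree_def)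
  have no_ended: "\<nexists>ps. bumper_ended ?V ?E (bumper k l M) ps"
    using assms(3) by (simp add: bumper_ended_def bumper_ended_path_def)
  have bad_trans: "transp_on ?V ?bad"
    by (rule transp_onI) (rule ends_in_bumper_trans[OF cg_E_symp acyclic no_ended])
  moreover have "irreflp_on ?V ?bad"
    by (simp add: irreflp_on_def ends_in_bumper_def)
  ultimately have "asymp_on ?V ?bad"
    by (simp add: asymp_on_iff_irreflp_on_if_transp_on)
  then obtain r where "r \<in> ?V" and "\<forall>q \<in> ?V. q \<noteq> r \<longrightarrow> \<not> ?bad r q"
    using Finite_Set.bex_max_element[OF finite_cg_V _ bad_trans nonempty] by blast
  then show ?thesis
    unfolding ends_in_bumper_def by blast
qed

end
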